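(* Let $r\ge 2$, let $\lambda,\mu\in\Lambda$ with $\lambda\sim_e\mu$, and let $s\in\mathbb{Z}$. Then $\eta(\lambda,s)\xrightarrow{r}_2\eta(\mu,s)$ (as elements of $\mathcal{A}_r^e$) if and only if $\Phi_r(\lambda,s)\xrightarrow{e}_2\Phi_r(\mu,s)$ (as elements of $\mathcal{A}_e^r$).
   Context: Fix an integer $e\ge 2$. A partition is a weakly decreasing sequence $\lambda=(\lambda_1,\lambda_2,\dots)$ of non-negative integers with finite sum $|\lambda|$; $\Lambda$ denotes the set of partitions and $\Lambda^{(m)}$ the set of $m$-multipartitions, i.e. $m$-tuples $\boldsymbol\lambda=(\lambda^{(1)},\dots,\lambda^{(m)})$ of partitions, with $|\boldsymbol\lambda|=\sum_k|\lambda^{(k)}|$. A $\beta$-set is a subset $B\subseteq\mathbb{Z}$ containing all sufficiently small integers and no sufficiently large ones. For $\lambda\in\Lambda$ and $s\in\mathbb{Z}$ set $B_s(\lambda)=\{\lambda_i-i+s : i\ge 1\}$; every $\beta$-set equals $B_s(\lambda)$ for a unique pair $(\lambda,s)$. For $N\ge 2$ let $\mathcal{A}_N=\Lambda\times\mathbb{Z}$ (abacus configurations with $N$ runners) and $\mathcal{A}_N^m=\Lambda^{(m)}\times\mathbb{Z}^m$, where $(\boldsymbol\lambda,\mathbf{s})$ is identified with the $m$-tuple of $\beta$-sets $(B_{s_1}(\lambda^{(1)}),\dots,B_{s_m}(\lambda^{(m)}))$. The map $\eta$: for $(\lambda,s)\in\mathcal{A}_e$ with $B=B_s(\lambda)$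 and $0\le i<e$, the set $C_i=\{(b-i)/e : b\in B,\ b\equiv i \bmod e\}$ is a $\beta$-set, so $C_i=B_{t_i}(\rho_i)$ for a unique $(\rho_i,t_i)\in\Lambda\times\mathbb{Z}$; set $\eta(\lambda,s)=((\rho_0,\dots,\rho_{e-1}),(t_0,\dots,t_{e-1}))\in\Lambda^{(e)}\times\mathbb{Z}^e$, which we also regard as an element of $\mathcal{A}_r^e$. The $e$-weight of $\lambda$ is $\mathrm{wt}(\lambda)=\sum_i|\rho_i|$. For $\lambda,\mu\in\Lambda$ write $\lambda\sim_e\mu$ if $|\lambda|=|\mu|$, $\mathrm{wt}(\lambda)=\mathrm{wt}(\mu)$ and $\lambda,\mu$ have the same $e$-core (equivalently, $(\lambda,s)$ and $(\mu,s)$ have the same $t$-component under $\eta$ and the same weight, for any $s$). Moves on $\mathcal{A}_N^m$, for $(\boldsymbol\lambda,\mathbf{s}),(\boldsymbol\mu,\mathbf{s})$ with the same $\mathbf{s}$: (1) $(\boldsymbol\lambda,\mathbf{s})\xrightarrow{N}_1(\boldsymbol\mu,\mathbf{s})$ if for some $k_1,k_2\in\{1,\dots,m\}$ the tuple of $\beta$-sets of $(\boldsymbol\mu,\mathbf{s})$ is obtained from that of $(\boldsymbol\lambda,\mathbf{s})$ by replacing an element $b$ of the $k_1$-th $\beta$-set by $b-N$ (not previously in that set) and then replacing an element $c$ of the $k_2$-th $\beta$-set by $c+N$ (not previously in that set). (2) $(\boldsymbol\lambda,\mathbf{s})\xrightarrow{N}_2(\boldsymbol\mu,\mathbf{s})$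 if there exist $k_1,k_2\in\{1,\dots,m\}$, $b_1,b_2\in\mathbb{Z}$ with $b_1\equiv b_2\bmod N$, and $h>0$, such that $b_1\in B_{s_{k_1}}(\lambda^{(k_1)})$, $b_1+h\notin B_{s_{k_1}}(\lambda^{(k_1)})$, $b_2\notin B_{s_{k_2}}(\lambda^{(k_2)})$, $b_2+h\in B_{s_{k_2}}(\lambda^{(k_2)})$, and the $\beta$-sets of $(\boldsymbol\mu,\mathbf{s})$ agree with those of $(\boldsymbol\lambda,\mathbf{s})$ except that $b_1$ is replaced by $b_1+h$ in component $k_1$ and $b_2+h$ is replaced by $b_2$ in component $k_2$. Uglov's map: for $1\le k\le r$ define $\psi_k:\mathbb{Z}\to\mathbb{Z}$ by $\psi_k(ae+i)=((a+1)r-k)e+i$ for $a\in\mathbb{Z}$, $0\le i<e$. For $(\boldsymbol\lambda,\mathbf{s})\in\mathcal{A}_e^r$ the set $B=\bigsqcup_{k=1}^r\psi_k(B_{s_k}(\lambda^{(k)}))$ is a $\beta$-set, and $\Psi_r(\boldsymbol\lambda,\mathbf{s})$ is the unique $(\tilde\lambda,\tilde s)\in\mathcal{A}_e$ with $B_{\tilde s}(\tilde\lambda)=B$. $\Psi_r:\mathcal{A}_e^r\to\mathcal{A}_e$ is a bijection; $\Phi_r=\Psi_r^{-1}$. *)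

theory Defs
  imports Main
begin

text \<open>A partition is represented by the list of its nonzero parts, weakly decreasing.
  Part lambda_(i+1) (1-indexed in the paper) is pnth lam i (0-indexed), 0 beyond the length.\<close>

type_synonym partition = "nat list"

definition is_partition :: "partition \<Rightarrow> bool" where
  "is_partition lam \<longleftrightarrow> sorted_wrt (\<ge>) lam \<and> (\<forall>x\<in>set lam. 0 < x)"

definition pnth :: "partition \<Rightarrow> nat \<Rightarrow> nat" where
  "pnth lam i = (if i < length lam then lam ! i else 0)"

definition psize :: "partition \<Rightarrow> nat" where
  "psize lam = sum_list lam"

definition beta :: "int \<Rightarrow> partition \<Rightarrow> int set" where
  "beta s lam = {int (pnth lam i) - (int i + 1) + s | i. True}"

definition beta_inv :: "int set \<Rightarrow> partition \<times> int" where
  "beta_inv C = (THE p. is_partition (fst p) \<and> beta (snd p) (fst p) = C)"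

text \<open>An element of A_N^m: a list of m partitions and a list of m charges.\<close>
type_synonym config = "partition list \<times> int list"

definition config_ok :: "nat \<Rightarrow> config \<Rightarrow> bool" where
  "config_ok m X \<longleftrightarrow> length (fst X) = m \<and> length (snd X) = m \<and>
     (\<forall>k<m. is_partition (fst X ! k))"

definition cbeta :: "config \<Rightarrow> nat \<Rightarrow> int set" where
  "cbeta X k = beta (snd X ! k) (fst X ! k)"

definition runner_set :: "nat \<Rightarrow> int set \<Rightarrow> nat \<Rightarrow> int set" where
  "runner_set e B i = {(b - int i) div int e | b. b \<in> B \<and> b mod int e = int i}"

definition eta :: "nat \<Rightarrow> partition \<Rightarrow> int \<Rightarrow> config" where
  "eta e lam s =
     (map (\<lambda>i. fst (beta_inv (runner_set e (beta s lam) i))) [0..<e],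
      map (\<lambda>i. snd (beta_inv (runner_set e (beta s lam) i))) [0..<e])"

definition ewt :: "nat \<Rightarrow> partition \<Rightarrow> nat" where
  "ewt e lam = sum_list (map psize (fst (eta e lam 0)))"

text \<open>e-core via the abacus: slide all beads on each runner up (charge 0).\<close>
definition ecore :: "nat \<Rightarrow> partition \<Rightarrow> partition" where
  "ecore e lam = fst (beta_inv
     {b. \<exists>i<e. b mod int e = int i \<and> (b - int i) div int e < snd (eta e lam 0) ! i})"

definition e_equiv :: "nat \<Rightarrow> partition \<Rightarrow> partition \<Rightarrow> bool" where
  "e_equiv e lam mu \<longleftrightarrow> psize lam = psize mu \<and> ewt e lam = ewt e mu \<and> ecore e lam = ecore e mu"

definition move2 :: "nat \<Rightarrow> config \<Rightarrow> config \<Rightarrow> bool" where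
  "move2 N X Y \<longleftrightarrow> (\<exists>m. config_ok m X \<and> config_ok m Y \<and> snd X = snd Y \<and>
     (\<exists>k1<m. \<exists>k2<m. \<exists>b1 b2 h. b1 mod int N = b2 mod int N \<and> h > 0 \<and>
        b1 \<in> cbeta X k1 \<and> b1 + h \<notin> cbeta X k1 \<and>
        b2 \<notin> cbeta X k2 \<and> b2 + h \<in> cbeta X k2 \<and>
        (\<forall>k<m. cbeta Y k =
           (cbeta X k - ((if k = k1 then {b1} else {}) \<union> (if k = k2 then {b2 + h} else {})))
             \<union> ((if k = k1 then {b1 + h} else {}) \<union> (if k = k2 then {b2} else {})))))"

definition psi :: "nat \<Rightarrow> nat \<Rightarrow> nat \<Rightarrow> int \<Rightarrow> int" where
  "psi e r k b = (((b div int e) + 1) * int r - int k) * int e + b mod int e"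

text \<open>Component k (1-indexed in the paper) is entry k-1 of the lists.\<close>
definition Psi :: "nat \<Rightarrow> nat \<Rightarrow> config \<Rightarrow> partition \<times> int" where
  "Psi e r X = beta_inv (\<Union>k<r. psi e r (k + 1) ` cbeta X k)"

definition Phi :: "nat \<Rightarrow> nat \<Rightarrow> partition \<Rightarrow> int \<Rightarrow> config" where
  "Phi e r lam s = (THE X. config_ok r X \<and> Psi e r X = (lam, s))"

end

theory Submission
  imports Defs
begin

text \<open>
  Both sides of the equivalence only see the single beta-set \<open>B = B\<^sub>s(\<lambda>)\<close>, read in two
  coordinate systems. Writing a point as \<open>b = (a r + v) e + u\<close> with \<open>0 \<le> u < e\<close> and
  \<open>0 \<le> v < r\<close>, the map \<open>\<eta>\<close> places it at position \<open>a r + v\<close> on runner \<open>u\<close>, while Uglov's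
  map \<open>\<Phi>\<^sub>r\<close> places it at position \<open>a e + u\<close> of component \<open>r - v\<close>. A move of type 2 trades
  two beads of \<open>B\<close> for two gaps, and in either coordinate system these four points have digits
  \<open>(a\<^sub>1, u\<^sub>1, v), (a\<^sub>1', u\<^sub>1, v'), (a\<^sub>2, u\<^sub>2, v), (a\<^sub>2', u\<^sub>2, v')\<close> with \<open>a\<^sub>2' - a\<^sub>2 = a\<^sub>1' - a\<^sub>1\<close>:
  a rectangle whose rows are the pairs \<open>(a, u)\<close> and whose columns are the digits \<open>v\<close>.
  Passing from \<open>\<eta>\<close> to \<open>\<Phi>\<^sub>r\<close> swaps the roles of rows and columns, and a rectangle is a move of
  type 2 either way. That the component charges are unchanged is automatic, since they are
  recovered from \<open>B\<close> and \<open>s\<close> by counting beads.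
\<close>

section \<open>Beta-sets and charges\<close>

definition is_beta_set :: "int set \<Rightarrow> bool" where
  "is_beta_set C \<longleftrightarrow> bdd_below (- C) \<and> bdd_above C"

lemma pnth_tl: "pnth (tl lam) j = pnth lam (Suc j)"
  unfolding pnth_def by (cases lam) auto

lemma pnth_Cons_0 [simp]: "pnth (a # lam) 0 = a"
  by (simp add: pnth_def)

lemma pnth_Nil [simp]: "pnth [] j = 0"
  by (simp add: pnth_def)

lemma pnth_antimono:
  assumes "is_partition lam" "i \<le> j"
  shows "pnth lam j \<le> pnth lam i"
  using assms unfolding is_partition_def pnth_def
  by (auto simp: sorted_wrt_iff_nth_less le_less)

lemma is_partition_Cons:
  "is_partition (a # lam) \<longleftrightarrow> 0 < a \<and> pnth lam 0 \<le> a \<and> is_partition lam"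
proof -
  have "(\<forall>y\<in>set lam. y \<le> a) \<longleftrightarrow> pnth lam 0 \<le> a" if "is_partition lam"
  proof
    assume "pnth lam 0 \<le> a"
    moreover have "y \<le> pnth lam 0" if "y \<in> set lam" for y
      using that pnth_antimono[OF \<open>is_partition lam\<close>, of 0]
      by (metis in_set_conv_nth pnth_def zero_le)
    ultimately show "\<forall>y\<in>set lam. y \<le> a" by fastforce
  qed (cases lam; simp)
  then show ?thesis
    unfolding is_partition_def by (auto simp: pnth_def)
qed

lemma is_partition_tl: "is_partition lam \<Longrightarrow> is_partition (tl lam)"
  by (cases lam) (auto simp: is_partition_Cons)

lemma partition_Nil_iff: "is_partition lam \<Longrightarrow> lam = [] \<longleftrightarrow> pnth lam 0 = 0"
  by (cases lam) (auto simp: is_partition_Cons)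

lemma beta_Nil: "beta t [] = {..<t}"
  unfolding beta_def by (auto intro!: exI[of _ "nat (t - _ - 1)"])

lemma beta_eq_insert_tl:
  "beta t lam = insert (int (pnth lam 0) - 1 + t) (beta (t - 1) (tl lam))"
proof -
  have "x \<in> beta t lam \<longleftrightarrow> x \<in> insert (int (pnth lam 0) - 1 + t) (beta (t - 1) (tl lam))" for x
  proof
    assume "x \<in> beta t lam"
    then obtain i where x: "x = int (pnth lam i) - (int i + 1) + t"
      unfolding beta_def by auto
    then show "x \<in> insert (int (pnth lam 0) - 1 + t) (beta (t - 1) (tl lam))"
      unfolding beta_def pnth_tl by (cases i) (auto intro!: exI[of _ "i - 1"])
  qed (auto simp: beta_def pnth_tl intro: exI[of _ 0] exI[of _ "Suc _"])
  then show ?thesis by blast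
qed

lemma beta_le_top:
  assumes "is_partition lam" "x \<in> beta t lam"
  shows "x \<le> int (pnth lam 0) - 1 + t"
proof -
  obtain i where "x = int (pnth lam i) - (int i + 1) + t"
    using assms(2) unfolding beta_def by auto
  then show ?thesis using pnth_antimono[OF assms(1), of 0 i] by simp
qed

lemma beta_tl_less_top:
  assumes "is_partition lam" "x \<in> beta (t - 1) (tl lam)"
  shows "x < int (pnth lam 0) - 1 + t"
  using beta_le_top[OF is_partition_tl[OF assms(1)] assms(2)]
    pnth_antimono[OF assms(1), of 0 1] by (simp add: pnth_tl)

lemma beta_tl:
  assumes "is_partition lam"
  shows "beta (t - 1) (tl lam) = beta t lam - {int (pnth lam 0) - 1 + t}"
  using beta_eq_insert_tl[of t lam] beta_tl_less_top[OF assms] by auto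

lemma beta_lower_part: "x < t - int (length lam) \<Longrightarrow> x \<in> beta t lam"
  unfolding beta_def pnth_def by (auto intro!: exI[of _ "nat (t - x - 1)"])

lemma is_beta_set_beta: "is_partition lam \<Longrightarrow> is_beta_set (beta t lam)"
  unfolding is_beta_set_def bdd_below_def bdd_above_def
  using beta_lower_part beta_le_top by (meson ComplD not_le)

lemma finite_beta_ge: "is_partition lam \<Longrightarrow> finite {c \<in> beta t lam. M \<le> c}"
  by (rule finite_subset[of _ "{M..int (pnth lam 0) - 1 + t}"]) (auto dest: beta_le_top)

lemma card_beta_ge:
  assumes "is_partition lam" "M \<le> t - int (length lam)"
  shows "card {c \<in> beta t lam. M \<le> c} = nat (t - M)"
  using assms
proof (induction lam arbitrary: t)
  case Nil
  have "{c \<in> beta t []. M \<le> c} = {M..<t}" by (auto simp: beta_Nil)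
  then show ?case by simp
next
  case (Cons a lam)
  define z where "z = int a - 1 + t"
  have "is_partition lam" "a > 0" using Cons.prems(1) by (simp_all add: is_partition_Cons)
  then have IH: "card {c \<in> beta (t - 1) lam. M \<le> c} = nat (t - 1 - M)"
    using Cons by simp
  have "{c \<in> beta t (a # lam). M \<le> c} = insert z {c \<in> beta (t - 1) lam. M \<le> c}"
    using beta_eq_insert_tl[of t "a # lam"] \<open>a > 0\<close> Cons.prems(2) by (auto simp: z_def)
  moreover have "z \<notin> beta (t - 1) lam"
  proof
    assume "z \<in> beta (t - 1) lam"
    then have "z < int (pnth (a # lam) 0) - 1 + t"
      using beta_tl_less_top[OF Cons.prems(1), of z t] by simp
    then show False by (simp add: z_def)
  qed
  moreover have "finite {c \<in> beta (t - 1) lam. M \<le> c}"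
    using finite_beta_ge[OF \<open>is_partition lam\<close>] .
  ultimately show ?case using IH Cons.prems(2) by simp
qed

lemma beta_charge_unique:
  assumes "is_partition lam" "is_partition lam'" "beta t lam = beta t' lam'"
  shows "t = t'"
proof -
  define M where "M = min (t - int (length lam)) (t' - int (length lam'))"
  have "nat (t - M) = nat (t' - M)"
    using card_beta_ge[OF assms(1), of M t] card_beta_ge[OF assms(2), of M t'] assms(3)
    by (simp add: M_def)
  then show ?thesis by (simp add: M_def)
qed

lemma beta_top_unique:
  assumes "is_partition lam" "is_partition lam'" "beta t lam = beta t lam'"
  shows "pnth lam 0 = pnth lam' 0"
proof -
  have "int (pnth lam 0) - 1 + t \<le> int (pnth lam' 0) - 1 + t"
    using beta_le_top[OF assms(2)] beta_eq_insert_tl[of t lam] assms(3) by blast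
  moreover have "int (pnth lam' 0) - 1 + t \<le> int (pnth lam 0) - 1 + t"
    using beta_le_top[OF assms(1)] beta_eq_insert_tl[of t lam'] assms(3) by blast
  ultimately show ?thesis by simp
qed

lemma beta_partition_unique:
  assumes "is_partition lam" "is_partition lam'" "beta t lam = beta t lam'"
  shows "lam = lam'"
  using assms
proof (induction lam arbitrary: lam' t)
  case Nil
  then show ?case using beta_top_unique[OF Nil.prems] partition_Nil_iff[OF Nil.prems(2)] by simp
next
  case (Cons a lam)
  have "pnth lam' 0 = a" "a > 0"
    using beta_top_unique[OF Cons.prems] Cons.prems(1) by (simp_all add: is_partition_Cons)
  then obtain lam'' where lam': "lam' = a # lam''" by (cases lam') auto
  have "beta (t - 1) lam = beta (t - 1) lam''"
    using beta_tl[OF Cons.prems(1), of t] beta_tl[OF Cons.prems(2), of t] Cons.prems(3) lam' by simp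
  then show ?case
    using Cons.IH Cons.prems(1,2) lam' by (simp add: is_partition_Cons)
qed

lemma beta_inj:
  "is_partition lam \<Longrightarrow> is_partition lam' \<Longrightarrow> beta t lam = beta t' lam' \<Longrightarrow> lam = lam' \<and> t = t'"
  using beta_charge_unique beta_partition_unique by blast

lemma ex_beta_atMost_Un:
  assumes "finite F" "\<forall>x\<in>F. L < x"
  shows "\<exists>t lam. is_partition lam \<and> beta t lam = {..L} \<union> F"
  using assms
proof (induction F rule: finite_linorder_max_induct)
  case empty
  have "beta (L + 1) [] = {..L}" by (auto simp: beta_Nil)
  then show ?case by (auto simp: is_partition_def intro!: exI[of _ "[]"])
next
  case (insert b F)
  then obtain t lam where lam: "is_partition lam" "beta t lam = {..L} \<union> F" by auto
  have "int (pnth lam 0) - 1 + t \<in> {..L} \<union> F"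
    using lam(2) beta_eq_insert_tl[of t lam] by auto
  then have top_less: "int (pnth lam 0) - 1 + t < b" using insert by force
  have extend: "\<exists>t lam. is_partition lam \<and> beta t lam = {..L} \<union> insert b F"
    if "is_partition lam'" "beta (t + 1) lam' = insert b (beta t lam)" for lam'
    using that lam(2) by auto
  show ?case
  proof (cases "b = t")
    case True
    then have "lam = []" using top_less partition_Nil_iff[OF lam(1)] by simp
    have "beta (t + 1) [] = insert t (beta t [])" by (auto simp: beta_Nil)
    then show ?thesis
      using extend[of "[]"] True \<open>lam = []\<close> by (simp add: is_partition_def)
  next
    case False
    then have "is_partition (nat (b - t) # lam)"
      using top_less lam(1) by (simp add: is_partition_Cons)
    moreover have "beta (t + 1) (nat (b - t) # lam) = insert b (beta t lam)"
      using beta_eq_insert_tl[of "t + 1" "nat (b - t) # lam"] top_less by simp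
    ultimately show ?thesis using extend by blast
  qed
qed

lemma beta_surj:
  assumes "is_beta_set C"
  obtains t lam where "is_partition lam" "beta t lam = C"
proof -
  obtain L U where L: "\<And>x. x \<notin> C \<Longrightarrow> L \<le> x" and U: "\<And>x. x \<in> C \<Longrightarrow> x \<le> U"
    using assms unfolding is_beta_set_def bdd_below_def bdd_above_def by auto
  have "finite {x \<in> C. L - 1 < x}"
    by (rule finite_subset[of _ "{L..U}"]) (auto simp: U)
  then have "\<exists>t lam. is_partition lam \<and> beta t lam = {..L - 1} \<union> {x \<in> C. L - 1 < x}"
    by (rule ex_beta_atMost_Un) simp
  moreover have "{..L - 1} \<union> {x \<in> C. L - 1 < x} = C"
    using L by force
  ultimately show ?thesis using that by blast
qed

lemma beta_inv_beta: "is_partition lam \<Longrightarrow> beta_inv (beta t lam) = (lam, t)"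
  unfolding beta_inv_def
  by (rule the_equality) (use beta_inj in \<open>auto simp: prod_eq_iff\<close>)

lemma beta_beta_inv:
  assumes "is_beta_set C"
  shows "is_partition (fst (beta_inv C))" "beta (snd (beta_inv C)) (fst (beta_inv C)) = C"
proof -
  obtain t lam where "is_partition lam" "beta t lam = C"
    using beta_surj[OF assms] .
  then show "is_partition (fst (beta_inv C))" "beta (snd (beta_inv C)) (fst (beta_inv C)) = C"
    using beta_inv_beta by auto
qed

lemma beta_charge_exchange:
  assumes "is_partition lam" "is_partition lam'"
    and "finite A" "finite A'" "A \<subseteq> beta t lam" "A' \<inter> beta t lam = {}"
    and exchange: "beta t' lam' = (beta t lam - A) \<union> A'"
  shows "t' + int (card A) = t + int (card A')"
proof -
  obtain M0 where M0: "\<forall>x\<in>A \<union> A'. M0 \<le> x"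
    using assms(3,4) bdd_below_finite[of "A \<union> A'"] unfolding bdd_below_def by blast
  define M where "M = min M0 (min (t - int (length lam)) (t' - int (length lam')))"
  have M: "\<forall>x\<in>A \<union> A'. M \<le> x" using M0 M_def by force
  define S where "S = {c \<in> beta t lam. M \<le> c}"
  have "finite S" "A \<subseteq> S"
    using finite_beta_ge[OF assms(1)] assms(5) M by (auto simp: S_def)
  have "{c \<in> beta t' lam'. M \<le> c} = (S - A) \<union> A'"
    using exchange M assms(5) by (auto simp: S_def)
  then have "card {c \<in> beta t' lam'. M \<le> c} = card S - card A + card A'"
    using \<open>finite S\<close> \<open>A \<subseteq> S\<close> assms(3,4,6)
    by (simp add: card_Un_disjoint card_Diff_subset S_def Int_commute disjoint_iff)
  moreover have "card A \<le> card S" using \<open>finite S\<close> \<open>A \<subseteq> S\<close> by (rule card_mono)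
  moreover have "card S = nat (t - M)" "card {c \<in> beta t' lam'. M \<le> c} = nat (t' - M)"
    using card_beta_ge[OF assms(1)] card_beta_ge[OF assms(2)] by (simp_all add: S_def M_def)
  moreover have "0 \<le> t - M" "0 \<le> t' - M" by (simp_all add: M_def)
  ultimately show ?thesis by linarith
qed

lemma strict_mono_int_ge:
  fixes f :: "int \<Rightarrow> int"
  assumes "strict_mono f" "x \<le> y"
  shows "f x + (y - x) \<le> f y"
  using assms(2)
proof (induction y rule: int_ge_induct)
  case (step y)
  then show ?case using strict_monoD[OF assms(1), of y "y + 1"] by simp
qed simp

lemma is_beta_set_vimage:
  fixes f :: "int \<Rightarrow> int"
  assumes "strict_mono f" "is_beta_set B"
  shows "is_beta_set (f -` B)"
proof -
  obtain L U where L: "\<And>x. x \<notin> B \<Longrightarrow> L \<le> x" and U: "\<And>x. x \<in> B \<Longrightarrow> x \<le> U"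
    using assms(2) unfolding is_beta_set_def bdd_below_def bdd_above_def by auto
  have "min 0 (L - f 0) \<le> x" if "f x \<notin> B" for x
    using L[OF that] strict_mono_int_ge[OF assms(1), of x 0] by (cases "x \<le> 0") auto
  moreover have "x \<le> max 0 (U - f 0)" if "f x \<in> B" for x
    using U[OF that] strict_mono_int_ge[OF assms(1), of 0 x] by (cases "0 \<le> x") auto
  ultimately show ?thesis
    unfolding is_beta_set_def bdd_below_def bdd_above_def by auto
qed

lemma coords_eq_iff:
  assumes "bij_betw (\<lambda>(k, b). pt k b) (J \<times> UNIV) UNIV" "k \<in> J" "k' \<in> J"
  shows "pt k b = pt k' b' \<longleftrightarrow> k = k' \<and> b = b'"
  using inj_on_eq_iff[OF bij_betw_imp_inj_on[OF assms(1)], of "(k, b)" "(k', b')"] assms(2,3)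
  by simp

lemma coords_cases:
  assumes "bij_betw (\<lambda>(k, b). pt k b) (J \<times> UNIV) UNIV"
  obtains k b where "k \<in> J" "y = pt k b"
proof -
  have "y \<in> (\<lambda>(k, b). pt k b) ` (J \<times> UNIV)"
    using bij_betw_imp_surj_on[OF assms] by simp
  then show ?thesis using that by auto
qed

lemma coords_set_eqI:
  assumes "bij_betw (\<lambda>(k, b). pt k b) (J \<times> UNIV) UNIV"
    and "\<And>k. k \<in> J \<Longrightarrow> pt k -` B = pt k -` B'"
  shows "B = B'"
proof (intro set_eqI)
  fix y
  obtain k b where "k \<in> J" "y = pt k b" using coords_cases[OF assms(1)] .
  then show "y \<in> B \<longleftrightarrow> y \<in> B'" using assms(2)[of k] by auto
qed

lemma vimage_UN_coords:
  assumes "bij_betw (\<lambda>(k, b). pt k b) (J \<times> UNIV) UNIV" "k \<in> J"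
  shows "pt k -` (\<Union>k'\<in>J. pt k' ` C k') = C k"
  using assms(2) by (auto simp: coords_eq_iff[OF assms(1)])

lemma UN_image_vimage_coords:
  assumes "bij_betw (\<lambda>(k, b). pt k b) (J \<times> UNIV) UNIV"
  shows "(\<Union>k\<in>J. pt k ` (pt k -` B)) = B"
proof (intro equalityI subsetI)
  fix y assume "y \<in> B"
  moreover obtain k b where "k \<in> J" "y = pt k b" using coords_cases[OF assms] .
  ultimately show "y \<in> (\<Union>k\<in>J. pt k ` (pt k -` B))" by blast
qed auto

lemma is_beta_set_UN_coords:
  assumes coords: "bij_betw (\<lambda>(k, b). pt k b) (J \<times> UNIV) UNIV" and "finite J"
    and "\<And>k. k \<in> J \<Longrightarrow> mono (pt k)" "\<And>k. k \<in> J \<Longrightarrow> is_beta_set (C k)"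
  shows "is_beta_set (\<Union>k\<in>J. pt k ` C k)"
proof -
  have "pt k -` (- (\<Union>k\<in>J. pt k ` C k)) = pt k -` (\<Union>k\<in>J. pt k ` (- C k))" if "k \<in> J" for k
    using vimage_UN_coords[OF coords that, of C] vimage_UN_coords[OF coords that, of "\<lambda>k. - C k"]
    by (simp only: vimage_Compl)
  then have "- (\<Union>k\<in>J. pt k ` C k) = (\<Union>k\<in>J. pt k ` (- C k))"
    by (rule coords_set_eqI[OF coords])
  moreover have "bdd_below (pt k ` (- C k))" "bdd_above (pt k ` C k)" if "k \<in> J" for k
    using assms(3,4)[OF that] unfolding is_beta_set_def
    by (simp_all add: bdd_above_image_mono bdd_below_image_mono)
  ultimately show ?thesis
    unfolding is_beta_set_def using \<open>finite J\<close> by simp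
qed

section \<open>Moves of type 2 on a single beta-set\<close>

definition config_of :: "nat \<Rightarrow> (nat \<Rightarrow> int set) \<Rightarrow> config" where
  "config_of m D = (map (\<lambda>k. fst (beta_inv (D k))) [0..<m], map (\<lambda>k. snd (beta_inv (D k))) [0..<m])"

lemma config_of:
  assumes "\<And>k. k < m \<Longrightarrow> is_beta_set (D k)"
  shows "config_ok m (config_of m D)" "\<And>k. k < m \<Longrightarrow> cbeta (config_of m D) k = D k"
  using beta_beta_inv[OF assms] by (simp_all add: config_ok_def config_of_def cbeta_def)

lemma config_eqI:
  assumes "config_ok m X" "config_ok m Y" "\<And>k. k < m \<Longrightarrow> cbeta X k = cbeta Y k"
  shows "X = Y"
proof -
  have "fst X ! k = fst Y ! k \<and> snd X ! k = snd Y ! k" if "k < m" for k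
    using beta_inj assms that unfolding config_ok_def cbeta_def by metis
  then show ?thesis
    using assms(1,2) unfolding config_ok_def by (simp add: prod_eq_iff nth_equalityI)
qed

text \<open>A move of type 2 seen on a single beta-set \<open>B\<close>, whose points are addressed as
  \<open>pt k b\<close> (component \<open>k \<in> J\<close>, position \<open>b\<close>) through a bijection \<open>J \<times> \<int> \<rightarrow> \<int>\<close>.\<close>
definition move2_on :: "('a \<Rightarrow> int \<Rightarrow> int) \<Rightarrow> 'a set \<Rightarrow> int \<Rightarrow> int set \<Rightarrow> int set \<Rightarrow> bool" where
  "move2_on pt J N B B' \<longleftrightarrow> (\<exists>k1\<in>J. \<exists>k2\<in>J. \<exists>b1 b2 h. b1 mod N = b2 mod N \<and> h > 0 \<and>
     pt k1 b1 \<in> B \<and> pt k1 (b1 + h) \<notin> B \<and> pt k2 b2 \<notin> B \<and> pt k2 (b2 + h) \<in> B \<and>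
     B' = (B - {pt k1 b1, pt k2 (b2 + h)}) \<union> {pt k1 (b1 + h), pt k2 b2})"

lemma move2_onI:
  assumes "k1 \<in> J" "k2 \<in> J" "b1 mod N = b2 mod N" "h > 0"
    and "pt k1 b1 \<in> B" "pt k1 (b1 + h) \<notin> B" "pt k2 b2 \<notin> B" "pt k2 (b2 + h) \<in> B"
    and "B' = (B - {pt k1 b1, pt k2 (b2 + h)}) \<union> {pt k1 (b1 + h), pt k2 b2}"
  shows "move2_on pt J N B B'"
  using assms unfolding move2_on_def by blast

lemma vimage_exchange_coords:
  assumes coords: "bij_betw (\<lambda>(k, b). pt k b) (J \<times> UNIV) UNIV"
    and "k \<in> J" "k1 \<in> J" "k2 \<in> J"
  shows "pt k -` ((B - {pt k1 b1, pt k2 c2}) \<union> {pt k1 d1, pt k2 d2}) =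
    (pt k -` B - ((if k = k1 then {b1} else {}) \<union> (if k = k2 then {c2} else {})))
      \<union> ((if k = k1 then {d1} else {}) \<union> (if k = k2 then {d2} else {}))"
  using assms(2-4) by (auto simp: coords_eq_iff[OF coords])

lemma config_charges_eqI:
  assumes X: "config_ok m X" and Y: "config_ok m Y"
    and exchange: "\<And>k. k < m \<Longrightarrow> cbeta Y k = (cbeta X k - A k) \<union> A' k"
    and "\<And>k. k < m \<Longrightarrow> finite (A k) \<and> finite (A' k)"
    and "\<And>k. k < m \<Longrightarrow> A k \<subseteq> cbeta X k \<and> A' k \<inter> cbeta X k = {}"
    and "\<And>k. k < m \<Longrightarrow> card (A k) = card (A' k)"
  shows "snd X = snd Y"
proof (rule nth_equalityI)
  show "length (snd X) = length (snd Y)" using X Y by (simp add: config_ok_def)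
  fix k assume "k < length (snd X)"
  then have "k < m" using X by (simp add: config_ok_def)
  have "is_partition (fst X ! k)" "is_partition (fst Y ! k)"
    using X Y \<open>k < m\<close> by (simp_all add: config_ok_def)
  then have "snd Y ! k + int (card (A k)) = snd X ! k + int (card (A' k))"
    using exchange[OF \<open>k < m\<close>] assms(4-5)[OF \<open>k < m\<close>] unfolding cbeta_def
    by (intro beta_charge_exchange) simp_all
  then show "snd X ! k = snd Y ! k" using assms(6)[OF \<open>k < m\<close>] by simp
qed

lemma move2_imp_move2_on:
  fixes pt :: "nat \<Rightarrow> int \<Rightarrow> int"
  assumes coords: "bij_betw (\<lambda>(k, b). pt k b) ({..<m} \<times> UNIV) UNIV"
    and X: "config_ok m X" "\<And>k. k < m \<Longrightarrow> cbeta X k = pt k -` B"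
    and Y: "\<And>k. k < m \<Longrightarrow> cbeta Y k = pt k -` B'"
    and "move2 N X Y"
  shows "move2_on pt {..<m} (int N) B B'"
proof -
  obtain m' k1 k2 b1 b2 h where "config_ok m' X" "k1 < m'" "k2 < m'"
    and step: "b1 mod int N = b2 mod int N" "h > 0"
      "b1 \<in> cbeta X k1" "b1 + h \<notin> cbeta X k1" "b2 \<notin> cbeta X k2" "b2 + h \<in> cbeta X k2"
    and Y_eq: "\<forall>k<m'. cbeta Y k =
           (cbeta X k - ((if k = k1 then {b1} else {}) \<union> (if k = k2 then {b2 + h} else {})))
             \<union> ((if k = k1 then {b1 + h} else {}) \<union> (if k = k2 then {b2} else {}))"
    using \<open>move2 N X Y\<close> unfolding move2_def by blast
  moreover have "m' = m" using \<open>config_ok m' X\<close> X(1) by (simp add: config_ok_def)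
  ultimately have k: "k1 \<in> {..<m}" "k2 \<in> {..<m}" by simp_all
  have "B' = (B - {pt k1 b1, pt k2 (b2 + h)}) \<union> {pt k1 (b1 + h), pt k2 b2}"
  proof (rule coords_set_eqI[OF coords])
    fix k assume "k \<in> {..<m}"
    then show "pt k -` B' = pt k -` ((B - {pt k1 b1, pt k2 (b2 + h)}) \<union> {pt k1 (b1 + h), pt k2 b2})"
      unfolding vimage_exchange_coords[OF coords \<open>k \<in> {..<m}\<close> k]
      using Y_eq X(2) Y \<open>m' = m\<close> by simp
  qed
  then show ?thesis
    using k step(1,2) step(3-6)[unfolded X(2)[OF k(1)[simplified]] X(2)[OF k(2)[simplified]]]
    by (intro move2_onI) simp_all
qed

lemma move2_on_imp_move2:
  fixes pt :: "nat \<Rightarrow> int \<Rightarrow> int"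
  assumes coords: "bij_betw (\<lambda>(k, b). pt k b) ({..<m} \<times> UNIV) UNIV"
    and X: "config_ok m X" "\<And>k. k < m \<Longrightarrow> cbeta X k = pt k -` beta s lam"
    and Y: "config_ok m Y" "\<And>k. k < m \<Longrightarrow> cbeta Y k = pt k -` beta s mu"
    and "is_partition lam" "is_partition mu"
    and "move2_on pt {..<m} (int N) (beta s lam) (beta s mu)"
  shows "move2 N X Y"
proof -
  obtain k1 k2 b1 b2 h where k: "k1 \<in> {..<m}" "k2 \<in> {..<m}"
    and step: "b1 mod int N = b2 mod int N" "h > 0"
    and beads: "pt k1 b1 \<in> beta s lam" "pt k1 (b1 + h) \<notin> beta s lam"
      "pt k2 b2 \<notin> beta s lam" "pt k2 (b2 + h) \<in> beta s lam"
    and exchange: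
      "beta s mu = (beta s lam - {pt k1 b1, pt k2 (b2 + h)}) \<union> {pt k1 (b1 + h), pt k2 b2}"
    using assms(8) unfolding move2_on_def by auto
  define A where "A k = (if k = k1 then {b1} else {}) \<union> (if k = k2 then {b2 + h} else {})" for k
  define A' where "A' k = (if k = k1 then {b1 + h} else {}) \<union> (if k = k2 then {b2} else {})" for k
  have Y_eq: "cbeta Y k = (cbeta X k - A k) \<union> A' k" if "k < m" for k
    using X(2) Y(2) that exchange vimage_exchange_coords[OF coords _ k, of k]
    by (simp add: A_def A'_def)
  \<comment> \<open>The global charge s is the same on both sides, so the exchange on the single beta-set
    removes as many beads as it adds; this rules out k1 = k2 with b1 = b2 + h.\<close>
  have "s + int (card {pt k1 b1, pt k2 (b2 + h)}) = s + int (card {pt k1 (b1 + h), pt k2 b2})"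
    using beta_charge_exchange[OF assms(6,7) _ _ _ _ exchange] beads by auto
  then have "card (A k) = card (A' k)" if "k < m" for k
    using that k step(2) by (auto simp: A_def A'_def coords_eq_iff[OF coords] card_insert_if)
  moreover have "A k \<subseteq> cbeta X k \<and> A' k \<inter> cbeta X k = {}" if "k < m" for k
    using X(2)[OF that] beads by (auto simp: A_def A'_def)
  ultimately have "snd X = snd Y"
    by (intro config_charges_eqI[OF X(1) Y(1) Y_eq]) (simp_all add: A_def A'_def)
  moreover have "b1 \<in> cbeta X k1" "b1 + h \<notin> cbeta X k1" "b2 \<notin> cbeta X k2" "b2 + h \<in> cbeta X k2"
    using beads X(2) k by simp_all
  ultimately show "move2 N X Y"
    unfolding move2_def using X(1) Y(1) Y_eq k step
    by (intro exI[of _ m] conjI exI[of _ k1] exI[of _ k2] exI[of _ b1] exI[of _ b2] exI[of _ h]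
        allI impI)
      (simp_all add: A_def A'_def)
qed

lemma move2_iff_move2_on:
  fixes pt :: "nat \<Rightarrow> int \<Rightarrow> int"
  assumes "bij_betw (\<lambda>(k, b). pt k b) ({..<m} \<times> UNIV) UNIV"
    and "config_ok m X" "\<And>k. k < m \<Longrightarrow> cbeta X k = pt k -` beta s lam"
    and "config_ok m Y" "\<And>k. k < m \<Longrightarrow> cbeta Y k = pt k -` beta s mu"
    and "is_partition lam" "is_partition mu"
  shows "move2 N X Y \<longleftrightarrow> move2_on pt {..<m} (int N) (beta s lam) (beta s mu)"
  using move2_imp_move2_on[OF assms(1-3,5)] move2_on_imp_move2[OF assms] by blast

lemma move2_on_image: "move2_on pt (f ` J) N B B' \<longleftrightarrow> move2_on (\<lambda>k. pt (f k)) J N B B'"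
  unfolding move2_on_def by blast

section \<open>Runner and Uglov coordinates\<close>

lemma mult_add_eq_iff:
  fixes p :: int
  assumes "0 \<le> u" "u < p" "0 \<le> u'" "u' < p"
  shows "a * p + u = a' * p + u' \<longleftrightarrow> a = a' \<and> u = u'"
proof
  assume eq: "a * p + u = a' * p + u'"
  have "(a * p + u) div p = (a' * p + u') div p" "(a * p + u) mod p = (a' * p + u') mod p"
    by (simp_all only: eq)
  then show "a = a' \<and> u = u'" using assms by simp
qed simp

lemma mult_add_less_mult_add:
  fixes p :: int
  assumes "0 \<le> u" "u < p" "0 \<le> u'" "a < a'"
  shows "a * p + u < a' * p + u'"
proof -
  have "(a + 1) * p \<le> a' * p" using assms by (intro mult_right_mono) auto
  then show ?thesis using assms by (simp add: algebra_simps)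
qed

lemma mult_add_less_iff:
  fixes p :: int
  assumes "0 \<le> u" "u < p" "0 \<le> u'" "u' < p"
  shows "a * p + u < a' * p + u' \<longleftrightarrow> a < a' \<or> a = a' \<and> u < u'"
  using mult_add_less_mult_add[of u p u' a a'] mult_add_less_mult_add[of u' p u a' a] assms
  by (cases a a' rule: linorder_cases) auto

lemma runner_coords:
  assumes "e > 0"
  shows "bij_betw (\<lambda>(i, c). c * int e + int i) ({..<e} \<times> UNIV) UNIV"
proof (rule bij_betwI')
  fix x y :: "nat \<times> int"
  assume "x \<in> {..<e} \<times> UNIV" "y \<in> {..<e} \<times> UNIV"
  then show "(case x of (i, c) \<Rightarrow> c * int e + int i) = (case y of (i, c) \<Rightarrow> c * int e + int i)
      \<longleftrightarrow> x = y"
    by (auto simp: mult_add_eq_iff split: prod.splits)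
next
  fix y :: int
  have "y = (y div int e) * int e + int (nat (y mod int e))" "nat (y mod int e) < e"
    using assms by (simp_all add: nat_less_iff)
  then show "\<exists>x\<in>{..<e} \<times> UNIV. y = (case x of (i, c) \<Rightarrow> c * int e + int i)"
    by (intro bexI[of _ "(nat (y mod int e), y div int e)"]) simp_all
qed auto

lemma runner_set_eq:
  assumes "i < e"
  shows "runner_set e B i = (\<lambda>c. c * int e + int i) -` B"
proof -
  have "b mod int e = int i \<longleftrightarrow> (\<exists>c. b = c * int e + int i)" for b
  proof
    assume "b mod int e = int i"
    then have "b = b div int e * int e + int i" by (metis div_mult_mod_eq)
    then show "\<exists>c. b = c * int e + int i" ..
  qed (use assms in auto)
  then show ?thesis
    unfolding runner_set_def using assms by force
qed

lemma eta_eq_config_of: "eta e lam s = config_of e (runner_set e (beta s lam))"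
  by (simp add: eta_def config_of_def)

lemma eta_config:
  assumes "e > 0" "is_partition lam"
  shows "config_ok e (eta e lam s)"
    "\<And>i. i < e \<Longrightarrow> cbeta (eta e lam s) i = (\<lambda>c. c * int e + int i) -` beta s lam"
proof -
  have "is_beta_set (runner_set e (beta s lam) i)" if "i < e" for i
    unfolding runner_set_eq[OF that]
    by (rule is_beta_set_vimage[OF _ is_beta_set_beta[OF assms(2)]])
      (use assms(1) in \<open>simp add: strict_mono_def\<close>)
  then show "config_ok e (eta e lam s)"
    "\<And>i. i < e \<Longrightarrow> cbeta (eta e lam s) i = (\<lambda>c. c * int e + int i) -` beta s lam"
    using config_of[of e] runner_set_eq unfolding eta_eq_config_of by simp_all
qed

lemma psi_eq:
  "psi e r (k + 1) x = (x div int e * int r + (int r - 1 - int k)) * int e + x mod int e"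
  unfolding psi_def by (simp add: algebra_simps)

lemma psi_coords:
  assumes "e > 0" "r > 0"
  shows "bij_betw (\<lambda>(k, x). psi e r (k + 1) x) ({..<r} \<times> UNIV) UNIV"
proof (rule bij_betwI')
  fix y :: "nat \<times> int" and y' :: "nat \<times> int"
  assume "y \<in> {..<r} \<times> UNIV" "y' \<in> {..<r} \<times> UNIV"
  moreover obtain k x k' x' where "y = (k, x)" "y' = (k', x')" by fastforce
  ultimately have "k < r" "k' < r" by simp_all
  have "psi e r (k + 1) x = psi e r (k' + 1) x' \<longleftrightarrow>
      x div int e = x' div int e \<and> int r - 1 - int k = int r - 1 - int k' \<and> x mod int e = x' mod int e"
    using assms \<open>k < r\<close> \<open>k' < r\<close> unfolding psi_eq by (simp add: mult_add_eq_iff)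
  also have "\<dots> \<longleftrightarrow> k = k' \<and> x = x'"
  proof
    assume digits: "x div int e = x' div int e \<and> int r - 1 - int k = int r - 1 - int k' \<and> x mod int e = x' mod int e"
    then have "x = x'" by (metis div_mult_mod_eq)
    with digits show "k = k' \<and> x = x'" by simp
  qed simp
  finally show "(case y of (k, x) \<Rightarrow> psi e r (k + 1) x) = (case y' of (k, x) \<Rightarrow> psi e r (k + 1) x)
      \<longleftrightarrow> y = y'"
    using \<open>y = (k, x)\<close> \<open>y' = (k', x')\<close> by simp
next
  fix y :: int
  define c where "c = y div int e"
  define k where "k = nat (int r - 1 - c mod int r)"
  have "0 \<le> c mod int r" "c mod int r < int r" using assms by simp_all
  then have "k < r" "int r - 1 - int k = c mod int r" by (simp_all add: k_def)
  then have "psi e r (k + 1) (c div int r * int e + y mod int e) = y"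
    using assms unfolding psi_eq by (simp add: c_def)
  then show "\<exists>x\<in>{..<r} \<times> UNIV. y = (case x of (k, x) \<Rightarrow> psi e r (k + 1) x)"
    using \<open>k < r\<close> by (intro bexI[of _ "(k, c div int r * int e + y mod int e)"]) simp_all
qed auto

lemma strict_mono_psi:
  assumes "e > 0" "r > 0" "k < r"
  shows "strict_mono (psi e r (k + 1))"
proof (rule strict_monoI)
  fix x x' :: int
  assume "x < x'"
  then have "x div int e < x' div int e \<or> x div int e = x' div int e \<and> x mod int e < x' mod int e"
    using mult_add_less_iff[of "x mod int e" "int e" "x' mod int e" "x div int e" "x' div int e"] assms
    by simp
  then show "psi e r (k + 1) x < psi e r (k + 1) x'"
    unfolding psi_eq using assms by (auto simp: mult_add_less_iff)
qed

lemma Phi_config: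
  assumes "e > 0" "r > 0" "is_partition lam"
  shows "config_ok r (Phi e r lam s)"
    "\<And>k. k < r \<Longrightarrow> cbeta (Phi e r lam s) k = psi e r (k + 1) -` beta s lam"
proof -
  define D where "D k = psi e r (k + 1) -` beta s lam" for k
  note coords = psi_coords[OF assms(1,2)]
  have D: "is_beta_set (D k)" if "k < r" for k
    unfolding D_def using strict_mono_psi[OF assms(1,2) that] is_beta_set_beta[OF assms(3)]
    by (rule is_beta_set_vimage)
  note X = config_of[of r D, OF D]
  have "(\<Union>k\<in>{..<r}. psi e r (k + 1) ` cbeta (config_of r D) k) = (\<Union>k\<in>{..<r}. psi e r (k + 1) ` D k)"
    using X(2) by simp
  also have "\<dots> = beta s lam"
    unfolding D_def by (rule UN_image_vimage_coords[OF coords])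
  finally have "config_ok r (config_of r D) \<and> Psi e r (config_of r D) = (lam, s)"
    using X(1) beta_inv_beta[OF assms(3)] by (simp add: Psi_def)
  moreover have "Y = config_of r D" if "config_ok r Y" "Psi e r Y = (lam, s)" for Y
  proof -
    define U where "U = (\<Union>k\<in>{..<r}. psi e r (k + 1) ` cbeta Y k)"
    have "is_beta_set U" unfolding U_def
      using that(1) strict_mono_psi[OF assms(1,2)] is_beta_set_beta
      by (intro is_beta_set_UN_coords[OF coords])
        (auto simp: strict_mono_mono config_ok_def cbeta_def)
    then have "beta s lam = U"
      using beta_beta_inv[of U] that(2) by (simp add: Psi_def U_def lessThan_def)
    then have "cbeta Y k = D k" if "k < r" for k
      using vimage_UN_coords[OF coords] that by (simp add: U_def D_def)
    then show ?thesis
      using X that(1) by (intro config_eqI[of r]) simp_all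
  qed
  ultimately have "Phi e r lam s = config_of r D"
    unfolding Phi_def by (intro the_equality) blast+
  then show "config_ok r (Phi e r lam s)"
    "\<And>k. k < r \<Longrightarrow> cbeta (Phi e r lam s) k = psi e r (k + 1) -` beta s lam"
    using X by (simp_all add: D_def)
qed

section \<open>Transposing the coordinates\<close>

lemma mod_eq_imp_add_div_diff:
  fixes q :: int
  assumes "b1 mod q = b2 mod q"
  shows "(b2 + h) mod q = (b1 + h) mod q" "(b2 + h) div q - b2 div q = (b1 + h) div q - b1 div q"
proof -
  show mods: "(b2 + h) mod q = (b1 + h) mod q" using assms by (metis mod_add_left_eq)
  have "(b1 + h) div q * q + (b1 + h) mod q = b1 + h" "(b2 + h) div q * q + (b2 + h) mod q = b2 + h"
    "b1 div q * q + b1 mod q = b1" "b2 div q * q + b2 mod q = b2"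
    by (fact div_mult_mod_eq)+
  then have "((b2 + h) div q - b2 div q) * q = ((b1 + h) div q - b1 div q) * q"
    unfolding left_diff_distrib using assms mods by linarith
  then show "(b2 + h) div q - b2 div q = (b1 + h) div q - b1 div q"
    by (cases "q = 0") simp_all
qed

lemma move2_on_rectangle:
  fixes p q :: int and F :: "int \<Rightarrow> int \<Rightarrow> int \<Rightarrow> int"
  assumes u: "0 \<le> u1" "u1 < p" "0 \<le> u2" "u2 < p" and j: "0 \<le> j" "j < q" "0 \<le> j'" "j' < q"
    and shift: "a2' = a2 + a1' - a1"
    and beads: "F a1 u1 j \<in> B" "F a1' u1 j' \<notin> B" "F a2 u2 j \<notin> B" "F a2' u2 j' \<in> B"
    and B': "B' = (B - {F a1 u1 j, F a2' u2 j'}) \<union> {F a1' u1 j', F a2 u2 j}"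
  shows "move2_on (\<lambda>v c. F (c div p) (c mod p) v) {0..<q} p B B'"
proof -
  define pt where "pt = (\<lambda>v c. F (c div p) (c mod p) v)"
  have pt: "pt v (a * p + u) = F a u v" if "0 \<le> u" "u < p" for a u v
    using that by (simp add: pt_def)
  define H where "H = (a2 - a1) * p + (u2 - u1)"
  have "H \<noteq> 0"
  proof
    assume "H = 0"
    then have "a1 * p + u1 = a2 * p + u2" by (simp add: H_def algebra_simps)
    then have "a1 = a2 \<and> u1 = u2" using u by (simp add: mult_add_eq_iff)
    then show False using beads(1,3) by simp
  qed
  then consider "H > 0" | "H < 0" by linarith
  then show ?thesis
  proof cases
    case 1
    have "a1 * p + u1 + H = a2 * p + u2" "a1' * p + u1 + H = a2' * p + u2"
      unfolding shift by (simp_all add: H_def algebra_simps)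
    then have "pt j (a1 * p + u1) = F a1 u1 j" "pt j (a1 * p + u1 + H) = F a2 u2 j"
      "pt j' (a1' * p + u1) = F a1' u1 j'" "pt j' (a1' * p + u1 + H) = F a2' u2 j'"
      using pt u by simp_all
    then show ?thesis
      unfolding pt_def[symmetric] using 1 u j beads B'
      by (intro move2_onI[of j _ j' "a1 * p + u1" _ "a1' * p + u1" H])
        (simp_all add: insert_commute)
  next
    case 2
    have "a2' * p + u2 + - H = a1' * p + u1" "a2 * p + u2 + - H = a1 * p + u1"
      unfolding shift by (simp_all add: H_def algebra_simps)
    then have "pt j' (a2' * p + u2) = F a2' u2 j'" "pt j' (a2' * p + u2 + - H) = F a1' u1 j'"
      "pt j (a2 * p + u2) = F a2 u2 j" "pt j (a2 * p + u2 + - H) = F a1 u1 j"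
      using pt u by simp_all
    then show ?thesis
      unfolding pt_def[symmetric] using 2 u j beads B'
      by (intro move2_onI[of j' _ j "a2' * p + u2" _ "a2 * p + u2" "- H"])
        (simp_all add: insert_commute)
  qed
qed

lemma move2_on_transpose:
  fixes p q :: int and F :: "int \<Rightarrow> int \<Rightarrow> int \<Rightarrow> int"
  assumes "p > 0" "q > 0"
    and "move2_on (\<lambda>u c. F (c div q) u (c mod q)) {0..<p} q B B'"
  shows "move2_on (\<lambda>v c. F (c div p) (c mod p) v) {0..<q} p B B'"
proof -
  obtain u1 u2 b1 b2 h where u: "0 \<le> u1" "u1 < p" "0 \<le> u2" "u2 < p"
    and "b1 mod q = b2 mod q"
    and beads: "F (b1 div q) u1 (b1 mod q) \<in> B" "F ((b1 + h) div q) u1 ((b1 + h) mod q) \<notin> B"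
      "F (b2 div q) u2 (b2 mod q) \<notin> B" "F ((b2 + h) div q) u2 ((b2 + h) mod q) \<in> B"
    and B': "B' = (B - {F (b1 div q) u1 (b1 mod q), F ((b2 + h) div q) u2 ((b2 + h) mod q)})
      \<union> {F ((b1 + h) div q) u1 ((b1 + h) mod q), F (b2 div q) u2 (b2 mod q)}"
    using assms(3) unfolding move2_on_def by auto
  have "(b2 + h) mod q = (b1 + h) mod q" "(b2 + h) div q = b2 div q + (b1 + h) div q - b1 div q"
    using mod_eq_imp_add_div_diff[OF \<open>b1 mod q = b2 mod q\<close>, of h] by simp_all
  then show ?thesis
    using \<open>q > 0\<close> beads B' unfolding \<open>b1 mod q = b2 mod q\<close>
    by (intro move2_on_rectangle[OF u, of "b2 mod q" q "(b1 + h) mod q"]) simp_all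
qed

lemma move2_on_transpose_iff:
  fixes p q :: int and F :: "int \<Rightarrow> int \<Rightarrow> int \<Rightarrow> int"
  assumes "p > 0" "q > 0"
  shows "move2_on (\<lambda>u c. F (c div q) u (c mod q)) {0..<p} q B B' \<longleftrightarrow>
    move2_on (\<lambda>v c. F (c div p) (c mod p) v) {0..<q} p B B'"
  using move2_on_transpose[OF assms, of F] move2_on_transpose[OF assms(2,1), of "\<lambda>a u v. F a v u"]
  by blast

lemma image_reverse_lessThan: "(\<lambda>k. int r - 1 - int k) ` {..<r} = {0..<int r}"
proof (intro equalityI subsetI)
  fix v assume "v \<in> {0..<int r}"
  then have "v = int r - 1 - int (nat (int r - 1 - v))" "nat (int r - 1 - v) < r" by auto
  then show "v \<in> (\<lambda>k. int r - 1 - int k) ` {..<r}" by blast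
qed auto

theorem lemma2p12:
  fixes e r :: nat and lam mu :: partition and s :: int
  assumes "e \<ge> 2" and "r \<ge> 2"
    and "is_partition lam" and "is_partition mu"
    and "e_equiv e lam mu"
  shows "move2 r (eta e lam s) (eta e mu s) \<longleftrightarrow> move2 e (Phi e r lam s) (Phi e r mu s)"
proof -
  have "e > 0" "r > 0" using assms(1,2) by simp_all
  define F where "F a u v = (a * int r + v) * int e + u" for a u v
  have psi_F: "(\<lambda>k. psi e r (k + 1)) = (\<lambda>k c. F (c div int e) (c mod int e) (int r - 1 - int k))"
    unfolding fun_eq_iff psi_eq F_def by simp
  have "move2 r (eta e lam s) (eta e mu s) \<longleftrightarrow>
      move2_on (\<lambda>i c. c * int e + int i) {..<e} (int r) (beta s lam) (beta s mu)"
    by (rule move2_iff_move2_on[OF runner_coords eta_config eta_config])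
      (use \<open>e > 0\<close> assms(3,4) in simp_all)
  also have "\<dots> \<longleftrightarrow>
      move2_on (\<lambda>u c. F (c div int r) u (c mod int r)) {0..<int e} (int r) (beta s lam) (beta s mu)"
    using move2_on_image[of "\<lambda>u c. c * int e + u" int "{..<e}"]
    by (simp add: F_def image_int_atLeastLessThan lessThan_atLeast0)
  also have "\<dots> \<longleftrightarrow>
      move2_on (\<lambda>v c. F (c div int e) (c mod int e) v) {0..<int r} (int e) (beta s lam) (beta s mu)"
    by (rule move2_on_transpose_iff) (use \<open>e > 0\<close> \<open>r > 0\<close> in simp_all)
  also have "\<dots> \<longleftrightarrow> move2_on (\<lambda>k. psi e r (k + 1)) {..<r} (int e) (beta s lam) (beta s mu)"
    unfolding psi_F image_reverse_lessThan[symmetric] by (rule move2_on_image)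
  also have "\<dots> \<longleftrightarrow> move2 e (Phi e r lam s) (Phi e r mu s)"
    by (rule move2_iff_move2_on[OF psi_coords Phi_config Phi_config, symmetric])
      (use \<open>e > 0\<close> \<open>r > 0\<close> assms(3,4) in simp_all)
  finally show ?thesis .
qed

end
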